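(* Let $(X_m)_{m\in\mathbb Z}$ be a homogeneous second order recurrence sequence with constant coefficients. For integers $a,b,c,d,e$ put $$\Delta=X_{d-a}X_{e-b}-X_{e-a}X_{d-b},\quad \Delta_1=X_{d-c}X_{e-b}-X_{e-c}X_{d-b},\quad \Delta_2=X_{d-a}X_{e-c}-X_{e-a}X_{d-c},$$ and suppose $\Delta_1\neq0$ and $\Delta_2\neq0$. Then for every nonnegative integer $k$ and every integer $m$: $$\sum_{r=0}^k\binom kr\left(\frac{\Delta_1}{\Delta_2}\right)^rX_{m-(b-c)k+(b-a)r}=\left(\frac{\Delta}{\Delta_2}\right)^kX_m,$$ $$\sum_{r=0}^k\binom kr\left(\frac{-\Delta}{\Delta_2}\right)^rX_{m+(a-b)k+(b-c)r}=\left(\frac{\Delta_1}{-\Delta_2}\right)^kX_m,$$ $$\sum_{r=0}^k\binom kr\left(\frac{-\Delta}{\Delta_1}\right)^rX_{m+(b-a)k+(a-c)r}=\left(\frac{\Delta_2}{-\Delta_1}\right)^kX_m.$$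
   Context: A homogeneous second order recurrence sequence with constant coefficients is a sequence $(X_m)_{m\in\mathbb Z}$ of complex numbers for which there are constants $p,q\in\mathbb C$, $q\neq 0$, with $X_m=pX_{m-1}+qX_{m-2}$ for all $m\in\mathbb Z$. Here $0^0=1$. *)

theory Defs
  imports Complex_Main
begin

definition hom_second_order_rec :: "(int \<Rightarrow> complex) \<Rightarrow> bool" where
  "hom_second_order_rec X \<longleftrightarrow>
     (\<exists>p q :: complex. q \<noteq> 0 \<and> (\<forall>m::int. X m = p * X (m - 1) + q * X (m - 2)))"

end

theory Submission
  imports Defs
begin

text \<open>The solutions of \<open>Y m = p Y (m-1) + q Y (m-2)\<close> with \<open>q \<noteq> 0\<close> form a two-dimensional
space, since a solution is determined by two consecutive values. Hence, if two solutions \<open>U, W\<close>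
have \<open>U d W e - U e W d \<noteq> 0\<close>, a solution vanishing at \<open>d\<close> and \<open>e\<close> vanishes identically.
The solution \<open>\<Delta>\<^sub>1 X(n-a) - \<Delta> X(n-c) + \<Delta>\<^sub>2 X(n-b)\<close> is the \<open>3\<times>3\<close> determinant with rows indexed by
\<open>n, d, e\<close>, so it vanishes at \<open>d\<close> and \<open>e\<close>, which gives the three-term relation
\<open>\<Delta>\<^sub>1 X(n-a) = \<Delta> X(n-c) - \<Delta>\<^sub>2 X(n-b)\<close>. Each of the three identities comes from rearranging it
as \<open>\<lambda> X(n+s) = X n + t X(n+u)\<close> and iterating \<open>k\<close> times, which expands \<open>\<lambda>\<^sup>k X(n+ks)\<close> like \<open>(1+t)\<^sup>k\<close>.\<close>

lemma sum_choose_Suc_split: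
  fixes g :: "nat \<Rightarrow> 'a::comm_semiring_1"
  shows "(\<Sum>r\<le>Suc k. of_nat (Suc k choose r) * g r)
       = (\<Sum>r\<le>k. of_nat (k choose r) * g r) + (\<Sum>r\<le>k. of_nat (k choose r) * g (Suc r))"
proof -
  have "(\<Sum>r\<le>k. of_nat (k choose r) * g r) = (\<Sum>r\<le>Suc k. of_nat (k choose r) * g r)"
    by (simp add: binomial_eq_0)
  also have "\<dots> = g 0 + (\<Sum>r\<le>k. of_nat (k choose Suc r) * g (Suc r))"
    by (simp only: sum.atMost_Suc_shift) simp
  finally show ?thesis
    by (simp add: sum.atMost_Suc_shift sum.distrib distrib_left distrib_right add_ac del: sum.atMost_Suc)
qed

lemma binomial_expansion_of_shift_relation:
  fixes X :: "int \<Rightarrow> 'a::comm_ring_1"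
  assumes rel: "\<And>n. l * X (n + s) = X n + t * X (n + u)"
  shows "l ^ k * X (n + s * int k) = (\<Sum>r\<le>k. of_nat (k choose r) * t ^ r * X (n + u * int r))"
proof (induction k arbitrary: n)
  case 0
  show ?case by simp
next
  case (Suc k)
  have "l ^ Suc k * X (n + s * int (Suc k)) = l ^ k * (l * X ((n + s * int k) + s))"
    by (simp add: algebra_simps)
  also have "\<dots> = l ^ k * (X (n + s * int k) + t * X ((n + s * int k) + u))"
    by (simp only: rel)
  also have "\<dots> = l ^ k * X (n + s * int k) + t * (l ^ k * X ((n + u) + s * int k))"
    by (simp add: algebra_simps)
  also have "\<dots> = (\<Sum>r\<le>k. of_nat (k choose r) * (t ^ r * X (n + u * int r)))
      + (\<Sum>r\<le>k. of_nat (k choose r) * (t ^ Suc r * X (n + u * int (Suc r))))"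
    unfolding Suc.IH sum_distrib_left by (simp add: algebra_simps)
  also have "\<dots> = (\<Sum>r\<le>Suc k. of_nat (Suc k choose r) * (t ^ r * X (n + u * int r)))"
    by (rule sum_choose_Suc_split[symmetric])
  finally show ?case by (simp add: mult.assoc)
qed

definition rec2_seq :: "'a::comm_ring_1 \<Rightarrow> 'a \<Rightarrow> (int \<Rightarrow> 'a) \<Rightarrow> bool" where
  "rec2_seq p q Y \<longleftrightarrow> (\<forall>m. Y m = p * Y (m - 1) + q * Y (m - 2))"

definition pair_det :: "(int \<Rightarrow> 'a::comm_ring_1) \<Rightarrow> (int \<Rightarrow> 'a) \<Rightarrow> int \<Rightarrow> int \<Rightarrow> 'a" where
  "pair_det U W i j = U i * W j - U j * W i"

lemma rec2_seq_shift: "rec2_seq p q Y \<Longrightarrow> rec2_seq p q (\<lambda>n. Y (n + s))"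
  unfolding rec2_seq_def by (metis add.commute add_diff_eq)

lemma rec2_seq_lincomb:
  assumes "rec2_seq p q U" and "rec2_seq p q W"
  shows "rec2_seq p q (\<lambda>n. \<alpha> * U n + \<beta> * W n)"
  unfolding rec2_seq_def
proof
  fix m
  have "U m = p * U (m - 1) + q * U (m - 2)" "W m = p * W (m - 1) + q * W (m - 2)"
    using assms unfolding rec2_seq_def by blast+
  then show "\<alpha> * U m + \<beta> * W m
      = p * (\<alpha> * U (m - 1) + \<beta> * W (m - 1)) + q * (\<alpha> * U (m - 2) + \<beta> * W (m - 2))"
    by (simp add: algebra_simps)
qed

lemma rec2_seq_eq_0:
  fixes Y :: "int \<Rightarrow> 'a::field"
  assumes "q \<noteq> 0" and Y: "rec2_seq p q Y" and "Y 0 = 0" "Y 1 = 0"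
  shows "Y n = 0"
proof -
  have rec: "Y m = p * Y (m - 1) + q * Y (m - 2)" for m
    using Y unfolding rec2_seq_def by blast
  have "Y i = 0 \<and> Y (i + 1) = 0" for i
  proof (induction i rule: int_induct[where k = 0])
    case base
    show ?case using assms by simp
  next
    case (step1 i)
    then show ?case using rec[of "i + 2"] by (simp add: algebra_simps)
  next
    case (step2 i)
    then show ?case using rec[of "i + 1"] \<open>q \<noteq> 0\<close> by auto
  qed
  then show ?thesis by blast
qed

lemma pair_det_annihilated:
  fixes U W :: "int \<Rightarrow> 'a::comm_ring_1"
  assumes "\<alpha> * U i + \<beta> * W i = 0" and "\<alpha> * U j + \<beta> * W j = 0"
  shows "\<alpha> * pair_det U W i j = 0" and "\<beta> * pair_det U W i j = 0"
proof -
  have "\<alpha> * pair_det U W i j = (\<alpha> * U i + \<beta> * W i) * W j - (\<alpha> * U j + \<beta> * W j) * W i"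
    and "\<beta> * pair_det U W i j = (\<alpha> * U j + \<beta> * W j) * U i - (\<alpha> * U i + \<beta> * W i) * U j"
    unfolding pair_det_def by (simp_all add: algebra_simps)
  with assms show "\<alpha> * pair_det U W i j = 0" and "\<beta> * pair_det U W i j = 0"
    by simp_all
qed

context
  fixes p q :: "'a::field"
  assumes q: "q \<noteq> 0"
begin

lemma rec2_seq_cramer_0_1:
  assumes U: "rec2_seq p q U" and W: "rec2_seq p q W" and Y: "rec2_seq p q Y"
  shows "pair_det U W 0 1 * Y n = pair_det Y W 0 1 * U n + pair_det U Y 0 1 * W n"
proof -
  define Z where "Z n = pair_det U W 0 1 * Y n + (- pair_det Y W 0 1 * U n + - pair_det U Y 0 1 * W n)"
    for n
  have "rec2_seq p q Z"
    unfolding Z_def using rec2_seq_lincomb[OF Y rec2_seq_lincomb[OF U W], of _ 1] by (simp only: mult_1)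
  moreover have "Z 0 = 0" "Z 1 = 0"
    unfolding Z_def pair_det_def by (simp_all add: algebra_simps)
  ultimately have "Z n = 0"
    using rec2_seq_eq_0[OF q] by blast
  then show ?thesis
    unfolding Z_def by (simp add: algebra_simps)
qed

lemma rec2_seq_pair_det_0_1_neq_0:
  assumes U: "rec2_seq p q U" and W: "rec2_seq p q W" and det: "pair_det U W d e \<noteq> 0"
  shows "pair_det U W 0 1 \<noteq> 0"
proof
  assume det01: "pair_det U W 0 1 = 0"
  have annihilated: "\<alpha> * pair_det U W d e = 0"  "\<beta> * pair_det U W d e = 0"
    if "\<alpha> * U 0 + \<beta> * W 0 = 0" "\<alpha> * U 1 + \<beta> * W 1 = 0" for \<alpha> \<beta>
  proof -
    have "\<alpha> * U n + \<beta> * W n = 0" for n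
      using rec2_seq_eq_0[OF q rec2_seq_lincomb[OF U W]] that by blast
    then show "\<alpha> * pair_det U W d e = 0" "\<beta> * pair_det U W d e = 0"
      using pair_det_annihilated by blast+
  qed
  \<comment> \<open>As \<open>pair_det U W 0 1 = 0\<close>, both \<open>(W 0, - U 0)\<close> and \<open>(W 1, - U 1)\<close> are admissible \<open>(\<alpha>, \<beta>)\<close>.\<close>
  have "W 0 = 0" "U 0 = 0" "W 1 = 0" "U 1 = 0"
    using annihilated[of "W 0" "- U 0"] annihilated[of "W 1" "- U 1"] det01 det
    unfolding pair_det_def by (simp_all add: algebra_simps)
  then have "U n = 0" for n
    using rec2_seq_eq_0[OF q U] by blast
  then show False
    using det unfolding pair_det_def by simp
qed

lemma rec2_seq_eq_0_if_vanishes_twice: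
  assumes U: "rec2_seq p q U" and W: "rec2_seq p q W" and det: "pair_det U W d e \<noteq> 0"
    and Z: "rec2_seq p q Z" and "Z d = 0" and "Z e = 0"
  shows "Z n = 0"
proof -
  define \<alpha> \<beta> where "\<alpha> = pair_det Z W 0 1" and "\<beta> = pair_det U Z 0 1"
  have span: "pair_det U W 0 1 * Z m = \<alpha> * U m + \<beta> * W m" for m
    unfolding \<alpha>_def \<beta>_def by (rule rec2_seq_cramer_0_1[OF U W Z])
  have "\<alpha> * U d + \<beta> * W d = 0" "\<alpha> * U e + \<beta> * W e = 0"
    using span[of d] span[of e] \<open>Z d = 0\<close> \<open>Z e = 0\<close> by simp_all
  then have "\<alpha> * pair_det U W d e = 0" "\<beta> * pair_det U W d e = 0"
    by (rule pair_det_annihilated)+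
  then have "\<alpha> = 0" "\<beta> = 0"
    using det by simp_all
  then show ?thesis
    using span[of n] rec2_seq_pair_det_0_1_neq_0[OF U W det] by simp
qed

lemma rec2_seq_cramer:
  assumes U: "rec2_seq p q U" and V: "rec2_seq p q V" and W: "rec2_seq p q W"
    and det: "pair_det V W d e \<noteq> 0"
  shows "pair_det V W d e * U n = pair_det U W d e * V n - pair_det U V d e * W n"
proof -
  define Z where "Z n = pair_det V W d e * U n + (- pair_det U W d e * V n + pair_det U V d e * W n)"
    for n
  have "rec2_seq p q Z"
    unfolding Z_def using rec2_seq_lincomb[OF U rec2_seq_lincomb[OF V W], of _ 1] by (simp only: mult_1)
  moreover have "Z d = 0" "Z e = 0"
    unfolding Z_def pair_det_def by (simp_all add: algebra_simps)
  ultimately have "Z n = 0"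
    using rec2_seq_eq_0_if_vanishes_twice[OF V W det] by blast
  then show ?thesis
    unfolding Z_def by (simp add: algebra_simps)
qed

end

lemma hom_second_order_rec_three_term:
  fixes X :: "int \<Rightarrow> complex" and a b c d e n :: int
  assumes rec: "hom_second_order_rec X"
    and det: "X (d - c) * X (e - b) - X (e - c) * X (d - b) \<noteq> 0"
  shows "(X (d - c) * X (e - b) - X (e - c) * X (d - b)) * X (n - a)
       = (X (d - a) * X (e - b) - X (e - a) * X (d - b)) * X (n - c)
         - (X (d - a) * X (e - c) - X (e - a) * X (d - c)) * X (n - b)"
proof -
  obtain p q where q: "q \<noteq> 0" and "rec2_seq p q X"
    using rec unfolding hom_second_order_rec_def rec2_seq_def by blast
  then have shifted: "rec2_seq p q (\<lambda>n. X (n - z))" for z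
    using rec2_seq_shift[of p q X "- z"] by simp
  show ?thesis
    using rec2_seq_cramer[OF q shifted[of a] shifted[of c] shifted[of b], of d e n] det
    unfolding pair_det_def by simp
qed

theorem lemma6:
  fixes X :: "int \<Rightarrow> complex" and a b c d e :: int
  assumes rec: "hom_second_order_rec X"
  defines "\<Delta> \<equiv> X (d - a) * X (e - b) - X (e - a) * X (d - b)"
  defines "\<Delta>\<^sub>1 \<equiv> X (d - c) * X (e - b) - X (e - c) * X (d - b)"
  defines "\<Delta>\<^sub>2 \<equiv> X (d - a) * X (e - c) - X (e - a) * X (d - c)"
  assumes h1: "\<Delta>\<^sub>1 \<noteq> 0" and h2: "\<Delta>\<^sub>2 \<noteq> 0"
  shows "\<forall>(k::nat) (m::int).
     (\<Sum>r=0..k. of_nat (k choose r) * (\<Delta>\<^sub>1 / \<Delta>\<^sub>2) ^ r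
          * X (m - (b - c) * int k + (b - a) * int r)) = (\<Delta> / \<Delta>\<^sub>2) ^ k * X m
   \<and> (\<Sum>r=0..k. of_nat (k choose r) * (- \<Delta> / \<Delta>\<^sub>2) ^ r
          * X (m + (a - b) * int k + (b - c) * int r)) = (\<Delta>\<^sub>1 / - \<Delta>\<^sub>2) ^ k * X m
   \<and> (\<Sum>r=0..k. of_nat (k choose r) * (- \<Delta> / \<Delta>\<^sub>1) ^ r
          * X (m + (b - a) * int k + (a - c) * int r)) = (\<Delta>\<^sub>2 / - \<Delta>\<^sub>1) ^ k * X m"
proof (intro allI conjI)
  fix k :: nat and m :: int
  have three_term: "\<Delta>\<^sub>1 * X (n - a) = \<Delta> * X (n - c) - \<Delta>\<^sub>2 * X (n - b)" for n
    using hom_second_order_rec_three_term[OF rec h1[unfolded \<Delta>\<^sub>1_def]]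
    unfolding \<Delta>_def \<Delta>\<^sub>1_def \<Delta>\<^sub>2_def .
  have shift_cancel: "m + (x - y) * int k + (y - x) * int k = m" for x y :: int
    by (simp add: algebra_simps)
  have "\<Delta> / \<Delta>\<^sub>2 * X (n + (b - c)) = X n + \<Delta>\<^sub>1 / \<Delta>\<^sub>2 * X (n + (b - a))" for n
    using three_term[of "n + b"] h2 by (simp add: field_simps)
  from binomial_expansion_of_shift_relation[OF this, of k "m - (b - c) * int k"]
  show "(\<Sum>r=0..k. of_nat (k choose r) * (\<Delta>\<^sub>1 / \<Delta>\<^sub>2) ^ r
          * X (m - (b - c) * int k + (b - a) * int r)) = (\<Delta> / \<Delta>\<^sub>2) ^ k * X m"
    by (simp only: atLeast0AtMost diff_add_cancel)
  have "\<Delta>\<^sub>1 / - \<Delta>\<^sub>2 * X (n + (b - a)) = X n + - \<Delta> / \<Delta>\<^sub>2 * X (n + (b - c))" for n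
    using three_term[of "n + b"] h2 by (simp add: field_simps)
  from binomial_expansion_of_shift_relation[OF this, of k "m + (a - b) * int k"]
  show "(\<Sum>r=0..k. of_nat (k choose r) * (- \<Delta> / \<Delta>\<^sub>2) ^ r
          * X (m + (a - b) * int k + (b - c) * int r)) = (\<Delta>\<^sub>1 / - \<Delta>\<^sub>2) ^ k * X m"
    by (simp only: atLeast0AtMost shift_cancel)
  have "\<Delta>\<^sub>2 / - \<Delta>\<^sub>1 * X (n + (a - b)) = X n + - \<Delta> / \<Delta>\<^sub>1 * X (n + (a - c))" for n
    using three_term[of "n + a"] h1 by (simp add: field_simps)
  from binomial_expansion_of_shift_relation[OF this, of k "m + (b - a) * int k"]
  show "(\<Sum>r=0..k. of_nat (k choose r) * (- \<Delta> / \<Delta>\<^sub>1) ^ r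
          * X (m + (b - a) * int k + (a - c) * int r)) = (\<Delta>\<^sub>2 / - \<Delta>\<^sub>1) ^ k * X m"
    by (simp only: atLeast0AtMost shift_cancel)
qed

end
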